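(* Suppose $\mathfrak g(A)$ is integrable, and $A$ is elemental and indecomposable with $n\ge2$. Then, after multiplying rows of $A$ by suitable nonzero scalars, $A$ satisfies: (C1) $a_{ii}\in\{0,2\}$ for all $i\in I$; (C2) if $a_{ii}=0$ then $p(i)=1$; (C3) if $a_{ii}=2$ then $a_{ij}\in 2^{p(i)}\mathbb Z_{\le0}$ for all $j\neq i$; (C4) if $a_{ij}=0$ and $a_{ji}\ne0$ then $a_{ii}=0$.
   Context: Let $I=\{1,\dots,n\}$, let $A=(a_{ij})_{i,j\in I}$ be a complex $n\times n$ matrix and $p:I\to\mathbb Z_2$ a parity function. Fix a complex vector space $\mathfrak h$ of dimension $n+\operatorname{corank}(A)$, linearly independent $\alpha_1,\dots,\alpha_n\in\mathfrak h^*$ and $h_1,\dots,h_n\in\mathfrak h$ with $\alpha_j(h_i)=a_{ij}$. Let $\bar{\mathfrak g}(A)$ be the Lie superalgebra generated by $\mathfrak h$ (even, abelian) and elements $X_i,Y_i$ ($i\in I$) of parity $p(i)$ subject to $[h,X_i]=\alpha_i(h)X_i$, $[h,Y_i]=-\alpha_i(h)Y_i$, $[X_i,Y_j]=\delta_{ij}h_i$. The contragredient Lie superalgebra $\mathfrak g(A)$ is the quotient of $\bar{\mathfrak g}(A)$ by the unique maximal ideal meeting $\mathfrak h$ trivially; we keep writing $X_i,Y_i,h_i$ for the images. Multiplying rows of $A$ by nonzero scalars does not change $\mathfrak g(A)$ up to isomorphism. $\mathfrak g(A)$ is integrable if $\operatorname{ad}X_i$ is locally nilpotent on $\mathfrak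 g(A)$ for every $i\in I$. $A$ is elemental if it has no zero row; indecomposable if $I$ is not a disjoint union of nonempty $J,K$ with $a_{jk}=a_{kj}=0$ for $j\in J,k\in K$. *)

theory Defs
  imports "HOL-Analysis.Analysis"
begin

text \<open>Z2-grading: parity is encoded as bool (True = odd). grade L0 L1 b is the homogeneous
  component of parity b.\<close>

definition grade :: "'v set \<Rightarrow> 'v set \<Rightarrow> bool \<Rightarrow> 'v set" where
  "grade L0 L1 b = (if b then L1 else L0)"

definition ssign :: "bool \<Rightarrow> bool \<Rightarrow> complex" where
  "ssign a b = (if a \<and> b then -1 else 1)"

text \<open>A complex Lie superalgebra whose underlying space is the whole type 'v, with
  scalar multiplication sc, bracket br and even/odd parts L0, L1.\<close>

definition lie_superalgebra ::
  "(complex \<Rightarrow> 'v::ab_group_add \<Rightarrow> 'v) \<Rightarrow> ('v \<Rightarrow> 'v \<Rightarrow> 'v) \<Rightarrow> 'v set \<Rightarrow> 'v set \<Rightarrow> bool" where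
  "lie_superalgebra sc br L0 L1 \<longleftrightarrow>
     vector_space sc \<and> module.subspace sc L0 \<and> module.subspace sc L1 \<and>
     (\<forall>v. \<exists>!ab. fst ab \<in> L0 \<and> snd ab \<in> L1 \<and> v = fst ab + snd ab) \<and>
     (\<forall>x y z. br (x + y) z = br x z + br y z) \<and>
     (\<forall>x y z. br x (y + z) = br x y + br x z) \<and>
     (\<forall>c x y. br (sc c x) y = sc c (br x y)) \<and>
     (\<forall>c x y. br x (sc c y) = sc c (br x y)) \<and>
     (\<forall>a b x y. x \<in> grade L0 L1 a \<longrightarrow> y \<in> grade L0 L1 b \<longrightarrow>
        br x y \<in> grade L0 L1 (a \<noteq> b)) \<and>
     (\<forall>a b x y. x \<in> grade L0 L1 a \<longrightarrow> y \<in> grade L0 L1 b \<longrightarrow>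
        br x y = - sc (ssign a b) (br y x)) \<and>
     (\<forall>a b x y z. x \<in> grade L0 L1 a \<longrightarrow> y \<in> grade L0 L1 b \<longrightarrow>
        br x (br y z) = br (br x y) z + sc (ssign a b) (br y (br x z)))"

definition corank :: "complex^'n^'n \<Rightarrow> nat" where
  "corank A = CARD('n) - rank A"

text \<open>The data (sc, br, L0, L1, H, \<alpha>, hh, X, Y) realise the contragredient Lie superalgebra
  g(A) for the matrix A (indexed by the finite type 'n) and parity p:
  H is the (embedded) Cartan subalgebra h, \<alpha> j are the simple roots (linear on H),
  hh i are the coroots h_i, X i, Y i the generators.  The algebra is generated by
  H and the X i, Y i subject to the defining relations (so it is a quotient of
  the free algebra bar g(A) in which h embeds), and it has no nonzero ideal meeting
  H trivially (so the kernel is the maximal ideal meeting h trivially).\<close>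

definition contragredient ::
  "complex^'n^'n \<Rightarrow> ('n \<Rightarrow> bool) \<Rightarrow> (complex \<Rightarrow> 'v::ab_group_add \<Rightarrow> 'v) \<Rightarrow> ('v \<Rightarrow> 'v \<Rightarrow> 'v)
   \<Rightarrow> 'v set \<Rightarrow> 'v set \<Rightarrow> 'v set \<Rightarrow> ('n \<Rightarrow> 'v \<Rightarrow> complex)
   \<Rightarrow> ('n \<Rightarrow> 'v) \<Rightarrow> ('n \<Rightarrow> 'v) \<Rightarrow> ('n \<Rightarrow> 'v) \<Rightarrow> bool" where
  "contragredient A p sc br L0 L1 H \<alpha> hh X Y \<longleftrightarrow>
     lie_superalgebra sc br L0 L1 \<and>
     module.subspace sc H \<and> H \<subseteq> L0 \<and>
     vector_space.dim sc H = CARD('n) + corank A \<and>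
     (\<forall>h\<in>H. \<forall>h'\<in>H. br h h' = 0) \<and>
     (\<forall>j. \<forall>h\<in>H. \<forall>h'\<in>H. \<alpha> j (h + h') = \<alpha> j h + \<alpha> j h') \<and>
     (\<forall>j c. \<forall>h\<in>H. \<alpha> j (sc c h) = c * \<alpha> j h) \<and>
     (\<forall>c :: 'n \<Rightarrow> complex. (\<forall>h\<in>H. (\<Sum>j\<in>UNIV. c j * \<alpha> j h) = 0) \<longrightarrow> (\<forall>j. c j = 0)) \<and>
     (\<forall>i. hh i \<in> H) \<and>
     (\<forall>i j. \<alpha> j (hh i) = A $ i $ j) \<and>
     (\<forall>i. X i \<in> grade L0 L1 (p i) \<and> Y i \<in> grade L0 L1 (p i)) \<and>
     (\<forall>i. \<forall>h\<in>H. br h (X i) = sc (\<alpha> i h) (X i)) \<and>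
     (\<forall>i. \<forall>h\<in>H. br h (Y i) = sc (- \<alpha> i h) (Y i)) \<and>
     (\<forall>i j. br (X i) (Y j) = (if i = j then hh i else 0)) \<and>
     (\<forall>S. module.subspace sc S \<and> (\<forall>x\<in>S. \<forall>y\<in>S. br x y \<in> S) \<and> H \<subseteq> S \<and>
          range X \<subseteq> S \<and> range Y \<subseteq> S \<longrightarrow> S = UNIV) \<and>
     (\<forall>J. module.subspace sc J \<and> (\<forall>x. \<forall>y\<in>J. br x y \<in> J \<and> br y x \<in> J) \<and>
          J \<inter> H = {0} \<longrightarrow> J = {0})"

definition lie_integrable :: "('v::ab_group_add \<Rightarrow> 'v \<Rightarrow> 'v) \<Rightarrow> ('n \<Rightarrow> 'v) \<Rightarrow> bool" where
  "lie_integrable br X \<longleftrightarrow> (\<forall>i v. \<exists>m. ((br (X i)) ^^ m) v = 0)"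

definition elemental :: "complex^'n^'n \<Rightarrow> bool" where
  "elemental A \<longleftrightarrow> (\<forall>i. \<exists>j. A $ i $ j \<noteq> 0)"

definition indecomposable :: "complex^'n^'n \<Rightarrow> bool" where
  "indecomposable A \<longleftrightarrow>
     \<not> (\<exists>J K. J \<noteq> {} \<and> K \<noteq> {} \<and> J \<inter> K = {} \<and> J \<union> K = UNIV \<and>
            (\<forall>j\<in>J. \<forall>k\<in>K. A $ j $ k = 0 \<and> A $ k $ j = 0))"

definition row_scale :: "('n \<Rightarrow> complex) \<Rightarrow> complex^'n^'n \<Rightarrow> complex^'n^'n" where
  "row_scale c A = (\<chi> i j. c i * A $ i $ j)"

text \<open>Conditions (C1)-(C4); p i = True means p(i) = 1 (odd).\<close>

definition conditions_C :: "complex^'n^'n \<Rightarrow> ('n \<Rightarrow> bool) \<Rightarrow> bool" where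
  "conditions_C A p \<longleftrightarrow>
     (\<forall>i. A $ i $ i = 0 \<or> A $ i $ i = 2) \<and>
     (\<forall>i. A $ i $ i = 0 \<longrightarrow> p i) \<and>
     (\<forall>i j. A $ i $ i = 2 \<longrightarrow> j \<noteq> i \<longrightarrow>
        (\<exists>k::int. k \<le> 0 \<and> A $ i $ j = (if p i then 2 else 1) * of_int k)) \<and>
     (\<forall>i j. A $ i $ j = 0 \<longrightarrow> A $ j $ i \<noteq> 0 \<longrightarrow> A $ i $ i = 0)"

end

theory Submission
  imports Defs
begin

(* Fix i \<noteq> j and look at the X_i-string through X_j, v_m = (ad X_i)^m X_j.
   Each v_m is an h_i-eigenvector of eigenvalue a_ij + m a_ii, and the lowering operator
   ad Y_i acts on the string by  [Y_i, v_m] = c_m v_(m-1),  where c_m obeys the recursion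
   c_0 = 0, c_(m+1) = s (c_m - (a_ij + m a_ii)) with s = (-1)^p(i).  Integrability makes the
   string vanish at some length M; descending with ad Y_i from v_M = 0 shows that v_k = 0
   as soon as c_m \<noteq> 0 for all k < m \<le> M.  Since v_0 = X_j \<noteq> 0, some c_m with m \<ge> 1
   must vanish, and the closed forms of c_m turn this into arithmetic constraints on
   a_ii and a_ij, which give (C1)-(C3) after rescaling row i by 2 / a_ii (when a_ii \<noteq> 0).
   For (C4): if a_ij = 0 and a_ii \<noteq> 0, the only zero of c_m is m = 1, so [X_i, X_j] = 0,
   and the super Jacobi identity applied to [Y_j, [X_i, X_j]] then forces a_ji = 0.
   The file first treats the sequence c_m purely arithmetically, then develops the string
   argument in a locale for the contragredient data, and finally assembles the theorem. *)

section \<open>The lowering coefficients\<close>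

text \<open>The scalar c_m by which ad Y_i maps the m-th string vector to the (m-1)-st, for
  sign s = (-1)^p(i), diagonal entry a = a_ii and off-diagonal entry b = a_ij.\<close>

fun lowering_coeff :: "complex \<Rightarrow> complex \<Rightarrow> complex \<Rightarrow> nat \<Rightarrow> complex" where
  "lowering_coeff s a b 0 = 0"
| "lowering_coeff s a b (Suc m) = s * (lowering_coeff s a b m - (b + of_nat m * a))"

lemma lowering_coeff_even:
  "2 * lowering_coeff 1 a b m = - (2 * of_nat m * b + of_nat m * (of_nat m - 1) * a)"
  by (induction m) (simp_all add: algebra_simps)

lemma lowering_coeff_odd_step:
  "lowering_coeff (-1) a b (Suc (Suc m)) = lowering_coeff (-1) a b m + a"
  by (simp add: algebra_simps)

lemma lowering_coeff_odd_even_index: "lowering_coeff (-1) a b (2 * k) = of_nat k * a"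
proof (induction k)
  case 0
  show ?case by simp
next
  case (Suc k)
  have "2 * Suc k = Suc (Suc (2 * k))" by simp
  with Suc show ?case by (simp only: lowering_coeff_odd_step) (simp add: algebra_simps)
qed

lemma lowering_coeff_odd_odd_index: "lowering_coeff (-1) a b (2 * k + 1) = b + of_nat k * a"
proof -
  have "lowering_coeff (-1) a b (Suc (2 * k)) = b + of_nat (2 * k) * a - of_nat k * a"
    by (simp only: lowering_coeff.simps lowering_coeff_odd_even_index) (simp add: algebra_simps)
  then show ?thesis by (simp add: algebra_simps)
qed

lemma lowering_coeff_even_zero:
  assumes "lowering_coeff 1 a b m = 0" and "m \<ge> 1"
  shows "2 * b = - ((of_nat m - 1) * a)"
proof -
  have "of_nat m * (2 * b + (of_nat m - 1) * a) = 0"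
    using lowering_coeff_even[of a b m] assms(1) by (simp add: algebra_simps)
  with assms(2) show ?thesis by (simp add: eq_neg_iff_add_eq_0)
qed

lemma lowering_coeff_odd_zero:
  assumes "lowering_coeff (-1) a b m = 0" and "m \<ge> 1" and "a \<noteq> 0"
  shows "\<exists>k. m = 2 * k + 1 \<and> b = - (of_nat k * a)"
proof (cases "even m")
  case True
  then obtain k where "m = 2 * k" by blast
  with assms lowering_coeff_odd_even_index[of a b k] show ?thesis by simp
next
  case False
  then obtain k where m: "m = 2 * k + 1" using oddE by blast
  with assms(1) lowering_coeff_odd_odd_index[of a b k] have "b + of_nat k * a = 0" by simp
  with m show ?thesis by (auto simp: eq_neg_iff_add_eq_0)
qed

section \<open>Strings of root vectors in a contragredient Lie superalgebra\<close>

lemma ssign_same: "ssign q q = (if q then -1 else 1)"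
  by (simp add: ssign_def)

locale contragredient_data =
  fixes A :: "complex^'n^'n" and p :: "'n \<Rightarrow> bool"
    and sc :: "complex \<Rightarrow> 'v::ab_group_add \<Rightarrow> 'v" and br :: "'v \<Rightarrow> 'v \<Rightarrow> 'v"
    and L0 L1 H :: "'v set" and \<alpha> :: "'n \<Rightarrow> 'v \<Rightarrow> complex"
    and hh X Y :: "'n \<Rightarrow> 'v"
  assumes contragredient: "contragredient A p sc br L0 L1 H \<alpha> hh X Y"
begin

lemma superalgebra: "lie_superalgebra sc br L0 L1"
  using contragredient unfolding contragredient_def by (elim conjE)

interpretation V: vector_space sc
  using superalgebra unfolding lie_superalgebra_def by (elim conjE)

lemma bracket_laws:
  "(\<forall>x y z. br (x + y) z = br x z + br y z) \<and>
   (\<forall>x y z. br x (y + z) = br x y + br x z) \<and>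
   (\<forall>c x y. br (sc c x) y = sc c (br x y)) \<and>
   (\<forall>c x y. br x (sc c y) = sc c (br x y)) \<and>
   (\<forall>a b x y. x \<in> grade L0 L1 a \<longrightarrow> y \<in> grade L0 L1 b \<longrightarrow>
      br x y = - sc (ssign a b) (br y x)) \<and>
   (\<forall>a b x y z. x \<in> grade L0 L1 a \<longrightarrow> y \<in> grade L0 L1 b \<longrightarrow>
      br x (br y z) = br (br x y) z + sc (ssign a b) (br y (br x z)))"
  using superalgebra unfolding lie_superalgebra_def by (elim conjE) (intro conjI; assumption)

lemma br_addL: "br (x + y) z = br x z + br y z"
  using bracket_laws by metis

lemma br_addR: "br x (y + z) = br x y + br x z"
  using bracket_laws by metis

lemma br_scL: "br (sc c x) y = sc c (br x y)"
  using bracket_laws by blast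

lemma br_scR: "br x (sc c y) = sc c (br x y)"
  using bracket_laws by blast

lemma br_skew:
  "x \<in> grade L0 L1 a \<Longrightarrow> y \<in> grade L0 L1 b \<Longrightarrow> br x y = - sc (ssign a b) (br y x)"
  using bracket_laws by blast

lemma br_jacobi:
  "x \<in> grade L0 L1 a \<Longrightarrow> y \<in> grade L0 L1 b \<Longrightarrow>
   br x (br y z) = br (br x y) z + sc (ssign a b) (br y (br x z))"
  using bracket_laws by blast

lemma br_0L: "br 0 z = 0"
  using br_addL[of 0 0 z] by simp

lemma br_0R: "br z 0 = 0"
  using br_addR[of z 0 0] by simp

lemma br_negL: "br (- x) z = - br x z"
  using br_addL[of x "- x" z] br_0L by (simp add: eq_neg_iff_add_eq_0 add.commute)

lemma br_negR: "br z (- x) = - br z x"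
  using br_addR[of z x "- x"] br_0R by (simp add: eq_neg_iff_add_eq_0 add.commute)

lemma defining_relations:
  "V.subspace H \<and> H \<subseteq> L0 \<and>
   (\<forall>j. \<forall>h\<in>H. \<forall>h'\<in>H. \<alpha> j (h + h') = \<alpha> j h + \<alpha> j h') \<and>
   (\<forall>i. hh i \<in> H) \<and>
   (\<forall>i j. \<alpha> j (hh i) = A $ i $ j) \<and>
   (\<forall>i. X i \<in> grade L0 L1 (p i) \<and> Y i \<in> grade L0 L1 (p i)) \<and>
   (\<forall>i. \<forall>h\<in>H. br h (X i) = sc (\<alpha> i h) (X i)) \<and>
   (\<forall>i j. br (X i) (Y j) = (if i = j then hh i else 0))"
  using contragredient unfolding contragredient_def by (elim conjE) (intro conjI; assumption)

lemma hh_even: "hh i \<in> grade L0 L1 False"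
  using defining_relations unfolding grade_def by auto

lemma X_grade: "X i \<in> grade L0 L1 (p i)"
  using defining_relations by blast

lemma Y_grade: "Y i \<in> grade L0 L1 (p i)"
  using defining_relations by blast

lemma alpha_hh: "\<alpha> j (hh i) = A $ i $ j"
  using defining_relations by blast

lemma br_hh_X: "br (hh i) (X j) = sc (A $ i $ j) (X j)"
  using defining_relations by (metis alpha_hh)

lemma br_X_Y: "br (X i) (Y j) = (if i = j then hh i else 0)"
  using defining_relations by (elim conjE) (erule allE)+

lemma alpha_0: "\<alpha> j 0 = 0"
proof -
  have "0 \<in> H" using defining_relations V.subspace_0 by blast
  then have "\<alpha> j (0 + 0) = \<alpha> j 0 + \<alpha> j 0" using defining_relations by blast
  then show ?thesis by simp
qed

text \<open>A generator with a nonzero row of A is nonzero, since [X_j, Y_j] = h_j \<noteq> 0.\<close>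

lemma X_nonzero:
  assumes "A $ j $ k \<noteq> 0"
  shows "X j \<noteq> 0"
proof
  assume "X j = 0"
  then have "hh j = 0" using br_X_Y[of j j] br_0L by simp
  then show False using assms alpha_hh[of k j] alpha_0 by simp
qed

definition xstring :: "'n \<Rightarrow> 'n \<Rightarrow> nat \<Rightarrow> 'v" where
  "xstring i j m = (br (X i) ^^ m) (X j)"

lemma xstring_0: "xstring i j 0 = X j"
  by (simp add: xstring_def)

lemma xstring_Suc: "xstring i j (Suc m) = br (X i) (xstring i j m)"
  by (simp add: xstring_def)

text \<open>The lowering coefficients of this string; ssign (p i) (p i) is the sign (-1)^p(i).\<close>

abbreviation string_coeff :: "'n \<Rightarrow> 'n \<Rightarrow> nat \<Rightarrow> complex" where
  "string_coeff i j \<equiv> lowering_coeff (ssign (p i) (p i)) (A $ i $ i) (A $ i $ j)"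

lemma xstring_weight:
  "br (hh i) (xstring i j m) = sc (A $ i $ j + of_nat m * A $ i $ i) (xstring i j m)"
proof (induction m)
  case 0
  then show ?case by (simp add: xstring_0 br_hh_X)
next
  case (Suc m)
  have "br (hh i) (xstring i j (Suc m)) = br (br (hh i) (X i)) (xstring i j m)
        + sc (ssign False (p i)) (br (X i) (br (hh i) (xstring i j m)))"
    unfolding xstring_Suc by (rule br_jacobi[OF hh_even X_grade])
  also have "\<dots> = sc (A $ i $ i) (xstring i j (Suc m))
        + sc (A $ i $ j + of_nat m * A $ i $ i) (xstring i j (Suc m))"
    using Suc by (simp add: ssign_def br_hh_X br_scL br_scR xstring_Suc)
  also have "\<dots> = sc (A $ i $ j + of_nat (Suc m) * A $ i $ i) (xstring i j (Suc m))"
    unfolding V.scale_left_distrib[symmetric] by (simp add: algebra_simps)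
  finally show ?case .
qed

lemma xstring_lower:
  assumes "i \<noteq> j"
  shows "br (Y i) (xstring i j m) = sc (string_coeff i j m) (xstring i j (m - 1))"
proof (induction m)
  case 0
  have "br (Y i) (X j) = - sc (ssign (p i) (p j)) (br (X j) (Y i))"
    by (rule br_skew[OF Y_grade X_grade])
  then show ?case using assms br_X_Y[of j i] br_0L by (simp add: xstring_0)
next
  case (Suc m)
  define s where "s = ssign (p i) (p i)"
  define w where "w = xstring i j m"
  have YX: "br (Y i) (X i) = - sc s (hh i)"
    using br_skew[OF Y_grade X_grade, of i i] br_X_Y[of i i] by (simp add: s_def)
  have raise: "br (X i) (br (Y i) w) = sc (string_coeff i j m) w"
    using Suc by (cases m) (simp_all add: w_def xstring_Suc br_scR br_0R s_def)
  have "br (Y i) (xstring i j (Suc m)) = br (br (Y i) (X i)) w + sc s (br (X i) (br (Y i) w))"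
    unfolding xstring_Suc w_def s_def by (rule br_jacobi[OF Y_grade X_grade])
  also have "\<dots> = sc (- (s * (A $ i $ j + of_nat m * A $ i $ i))) w
                  + sc s (sc (string_coeff i j m) w)"
    using xstring_weight[of i j m, folded w_def]
    by (simp only: raise YX br_negL br_scL V.scale_scale V.scale_minus_left)
  also have "\<dots> = sc (string_coeff i j (Suc m)) w"
    unfolding V.scale_scale V.scale_left_distrib[symmetric] by (simp add: algebra_simps s_def)
  finally show ?case by (simp add: w_def)
qed

lemma xstring_descent:
  assumes ij: "i \<noteq> j" and vanish: "xstring i j M = 0"
    and coeff: "\<And>m. k < m \<Longrightarrow> m \<le> M \<Longrightarrow> string_coeff i j m \<noteq> 0"
  shows "xstring i j k = 0"
proof (cases "k \<le> M")
  case True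
  then show ?thesis
  proof (induction k rule: inc_induct)
    case base
    show ?case by (rule vanish)
  next
    case (step m)
    have "sc (string_coeff i j (Suc m)) (xstring i j m) = 0"
      using xstring_lower[OF ij, of "Suc m"] step.IH br_0R by simp
    with coeff[of "Suc m"] step.hyps show ?case by simp
  qed
next
  case False
  have "xstring i j (M + d) = 0" for d
    by (induction d) (simp_all add: vanish xstring_Suc br_0R)
  from this[of "k - M"] False show ?thesis by simp
qed

text \<open>If the X_i-string through X_j has finite length, some coefficient c_m with m \<ge> 1
  vanishes, because the string starts at X_j \<noteq> 0.\<close>

lemma string_coeff_vanishes:
  assumes "i \<noteq> j" and "xstring i j M = 0" and "A $ j $ k \<noteq> 0"
  shows "\<exists>m\<ge>1. string_coeff i j m = 0"
proof (rule ccontr)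
  assume "\<not> ?thesis"
  then have "xstring i j 0 = 0" by (intro xstring_descent[OF assms(1,2)]) auto
  with X_nonzero[OF assms(3)] show False by (simp add: xstring_0)
qed

text \<open>If [X_i, X_j] = 0 for i \<noteq> j, then a_ji = 0: apply ad Y_j and use the Jacobi identity.\<close>

lemma commuting_generators:
  assumes ij: "i \<noteq> j" and XX: "br (X i) (X j) = 0" and row: "A $ i $ k \<noteq> 0"
  shows "A $ j $ i = 0"
proof -
  have YX: "br (Y j) (X i) = 0"
    using br_skew[OF Y_grade X_grade, of j i] br_X_Y[of i j] ij br_0L by simp
  have YXj: "br (Y j) (X j) = - sc (ssign (p j) (p j)) (hh j)"
    using br_skew[OF Y_grade X_grade, of j j] br_X_Y[of j j] by simp
  have Xh: "br (X i) (hh j) = - sc (A $ j $ i) (X i)"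
    using br_skew[OF X_grade hh_even, of i j] br_hh_X[of j i] by (simp add: ssign_def)
  have "br (Y j) (br (X i) (X j)) = br (br (Y j) (X i)) (X j)
        + sc (ssign (p j) (p i)) (br (X i) (br (Y j) (X j)))"
    by (rule br_jacobi[OF Y_grade X_grade])
  then have "sc (ssign (p j) (p i) * (ssign (p j) (p j) * A $ j $ i)) (X i) = 0"
    using XX YX YXj Xh br_0L br_0R by (simp add: br_negR br_scR)
  with X_nonzero[OF row] show ?thesis by (simp add: ssign_def split: if_splits)
qed

section \<open>Consequences of integrability\<close>

context
  assumes integrable: "lie_integrable br X" and elem: "elemental A"
begin

lemma xstring_finite: "\<exists>M. xstring i j M = 0"
  using integrable unfolding lie_integrable_def xstring_def by blast

lemma string_coeff_zero:
  assumes "i \<noteq> j"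
  obtains m where "m \<ge> 1" and "string_coeff i j m = 0"
proof -
  obtain M where "xstring i j M = 0" using xstring_finite by blast
  moreover obtain k where "A $ j $ k \<noteq> 0" using elem unfolding elemental_def by blast
  ultimately show ?thesis using string_coeff_vanishes[OF assms] that by blast
qed

text \<open>(C2) before rescaling: a zero diagonal entry belongs to an odd index.\<close>

lemma zero_diagonal_odd:
  assumes "A $ i $ i = 0"
  shows "p i"
proof (rule ccontr)
  assume even: "\<not> p i"
  obtain j where j: "A $ i $ j \<noteq> 0" using elem unfolding elemental_def by blast
  with assms have "i \<noteq> j" by auto
  then obtain m where "m \<ge> 1" "string_coeff i j m = 0" by (rule string_coeff_zero)
  then have "2 * A $ i $ j = 0"
    using lowering_coeff_even_zero[of "A $ i $ i"] assms even by (simp add: ssign_same)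
  with j show False by simp
qed

text \<open>(C3) before rescaling: for a_ii \<noteq> 0, 2 a_ij / a_ii lies in 2^p(i) \<int>_(\<le>0).\<close>

lemma offdiagonal_integral:
  assumes aii: "A $ i $ i \<noteq> 0" and "j \<noteq> i"
  shows "\<exists>k::int. k \<le> 0 \<and> 2 * A $ i $ j / A $ i $ i = (if p i then 2 else 1) * of_int k"
proof -
  obtain m where m: "m \<ge> 1" "string_coeff i j m = 0"
    using \<open>j \<noteq> i\<close> string_coeff_zero by metis
  show ?thesis
  proof (cases "p i")
    case False
    then have "2 * A $ i $ j = - ((of_nat m - 1) * A $ i $ i)"
      using m lowering_coeff_even_zero by (simp add: ssign_same)
    then have "2 * A $ i $ j / A $ i $ i = of_int (1 - int m)"
      using aii by (simp add: field_simps)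
    with False m(1) show ?thesis by (intro exI[of _ "1 - int m"]) auto
  next
    case True
    then obtain k where "A $ i $ j = - (of_nat k * A $ i $ i)"
      using m lowering_coeff_odd_zero[OF _ _ aii] by (auto simp: ssign_same)
    then have "2 * A $ i $ j / A $ i $ i = 2 * of_int (- int k)"
      using aii by simp
    with True show ?thesis by (intro exI[of _ "- int k"]) auto
  qed
qed

text \<open>(C4): if a_ij = 0 and a_ii \<noteq> 0 then c_m \<noteq> 0 for m \<ge> 2, so the string stops at
  [X_i, X_j] = 0, whence a_ji = 0.\<close>

lemma zero_entry_symmetric:
  assumes aij: "A $ i $ j = 0" and aii: "A $ i $ i \<noteq> 0"
  shows "A $ j $ i = 0"
proof -
  have ij: "i \<noteq> j" using aij aii by auto
  have coeff: "string_coeff i j m \<noteq> 0" if "1 < m" for m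
  proof
    assume zero: "string_coeff i j m = 0"
    show False
    proof (cases "p i")
      case False
      then have "(of_nat m - 1) * A $ i $ i = 0"
        using zero that lowering_coeff_even_zero[of "A $ i $ i" 0 m] aij by (simp add: ssign_same)
      with that aii show False by simp
    next
      case True
      then show False
        using zero that lowering_coeff_odd_zero[of "A $ i $ i" 0 m] aij aii by (auto simp: ssign_same)
    qed
  qed
  obtain M where "xstring i j M = 0" using xstring_finite by blast
  then have "xstring i j 1 = 0" using xstring_descent[OF ij] coeff by blast
  then have "br (X i) (X j) = 0" by (simp add: xstring_def)
  with commuting_generators[OF ij _ aii] show ?thesis by blast
qed

end

end

definition normalizer :: "complex^'n^'n \<Rightarrow> 'n \<Rightarrow> complex" where
  "normalizer A i = (if A $ i $ i = 0 then 1 else 2 / A $ i $ i)"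

lemma normalizer_nonzero: "normalizer A i \<noteq> 0"
  by (simp add: normalizer_def)

lemma normalized_entry: "row_scale (normalizer A) A $ i $ j = normalizer A i * A $ i $ j"
  by (simp add: row_scale_def)

lemma normalized_diagonal:
  "row_scale (normalizer A) A $ i $ i = (if A $ i $ i = 0 then 0 else 2)"
  by (simp add: normalized_entry normalizer_def)

lemma conditions_C_normalized:
  assumes odd: "\<And>i. A $ i $ i = 0 \<Longrightarrow> p i"
    and integral: "\<And>i j. A $ i $ i \<noteq> 0 \<Longrightarrow> j \<noteq> i \<Longrightarrow>
      \<exists>k::int. k \<le> 0 \<and> 2 * A $ i $ j / A $ i $ i = (if p i then 2 else 1) * of_int k"
    and symmetric: "\<And>i j. A $ i $ j = 0 \<Longrightarrow> A $ i $ i \<noteq> 0 \<Longrightarrow> A $ j $ i = 0"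
  shows "conditions_C (row_scale (normalizer A) A) p"
  unfolding conditions_C_def
proof (intro conjI allI impI)
  let ?B = "row_scale (normalizer A) A"
  fix i
  show "?B $ i $ i = 0 \<or> ?B $ i $ i = 2" by (simp add: normalized_diagonal)
  show "p i" if "?B $ i $ i = 0"
    using that odd by (simp add: normalized_diagonal split: if_splits)
  fix j
  show "\<exists>k::int. k \<le> 0 \<and> ?B $ i $ j = (if p i then 2 else 1) * of_int k"
    if "?B $ i $ i = 2" and "j \<noteq> i"
  proof -
    have aii: "A $ i $ i \<noteq> 0" using that(1) by (simp add: normalized_diagonal split: if_splits)
    then have "?B $ i $ j = 2 * A $ i $ j / A $ i $ i" by (simp add: normalized_entry normalizer_def)
    with integral[OF aii that(2)] show ?thesis by simp
  qed
  show "?B $ i $ i = 0" if "?B $ i $ j = 0" and "?B $ j $ i \<noteq> 0"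
  proof -
    have "A $ i $ j = 0" "A $ j $ i \<noteq> 0"
      using that by (simp_all add: normalized_entry normalizer_nonzero)
    with symmetric have "A $ i $ i = 0" by blast
    then show ?thesis by (simp add: normalized_diagonal)
  qed
qed

theorem lemma3p1:
  fixes A :: "complex^'n^'n" and p :: "'n \<Rightarrow> bool"
    and sc :: "complex \<Rightarrow> 'v::ab_group_add \<Rightarrow> 'v" and br :: "'v \<Rightarrow> 'v \<Rightarrow> 'v"
    and L0 L1 H :: "'v set" and \<alpha> :: "'n \<Rightarrow> 'v \<Rightarrow> complex"
    and hh X Y :: "'n \<Rightarrow> 'v"
  assumes "contragredient A p sc br L0 L1 H \<alpha> hh X Y"
    and "lie_integrable br X"
    and "elemental A"
    and "indecomposable A"
    and "CARD('n) \<ge> 2"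
  shows "\<exists>c :: 'n \<Rightarrow> complex. (\<forall>i. c i \<noteq> 0) \<and> conditions_C (row_scale c A) p"
proof -
  interpret contragredient_data A p sc br L0 L1 H \<alpha> hh X Y
    using assms(1) by unfold_locales
  have "conditions_C (row_scale (normalizer A) A) p"
    using zero_diagonal_odd[OF assms(2,3)] offdiagonal_integral[OF assms(2,3)]
      zero_entry_symmetric[OF assms(2,3)]
    by (rule conditions_C_normalized)
  with normalizer_nonzero show ?thesis by blast
qed

end
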